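(* Let $\mathbf{S}\in\mathbb{R}^{d_v\times d_k}$ be a nonzero matrix with largest singular value $\sigma_1$ and an associated unit right singular vector $\mathbf{w}_1\in\mathbb{R}^{d_k}$, and let $d=\min(d_k,d_v)$. Let $\mathbf{q}^*\in\mathbb{R}^{d_k}$ with $\|\mathbf{q}^*\|_2=1$, $\mathbf{S}\mathbf{q}^*\neq\mathbf{0}$, and $\gamma=|\mathbf{q}^{*\top}\mathbf{w}_1|>0$. Let the noise be isotropic Gaussian, $\mathbf{n}\sim\mathcal{N}(\mathbf{0},\xi^2\mathbf{I}_{d_k})$ with $\xi>0$, and set $\mathbf{o}=\mathbf{S}(\mathbf{q}^*+\mathbf{n})$, $\mathbf{o}^*=\mathbf{S}\mathbf{q}^*$. Then $$\sqrt{\frac{2}{\pi\operatorname{er}(\mathbf{S})}}\,\xi\le\mathbb{E}\left[\frac{\|\mathbf{o}-\mathbf{o}^*\|_2}{\|\mathbf{o}^*\|_2}\right]\le\frac{\sqrt{\operatorname{er}(\mathbf{S})}}{\gamma}\,\xi\,\mu,\qquad \mu:=\sqrt{2}\,\frac{\Gamma(\frac{d+1}{2})}{\Gamma(\frac d2)}.$$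
   Context: For a nonzero matrix $\mathbf{S}$ with singular values $\sigma_1\ge\sigma_2\ge\cdots\ge0$, the effective rank is $\operatorname{er}(\mathbf{S})=\|\mathbf{S}\|_F^2/\|\mathbf{S}\|_2^2=\sum_i\sigma_i^2/\sigma_1^2$. $\Gamma$ is the Gamma function. *)

theory Defs
  imports "HOL-Probability.Probability"
begin

definition frob_norm :: "real^'k^'v \<Rightarrow> real" where
  "frob_norm S = sqrt (\<Sum>i\<in>UNIV. \<Sum>j\<in>UNIV. (S $ i $ j)\<^sup>2)"

text \<open>Spectral norm = operator 2-norm = largest singular value sigma_1.\<close>
definition spec_norm :: "real^'k^'v \<Rightarrow> real" where
  "spec_norm S = onorm (\<lambda>x. S *v x)"

definition eff_rank :: "real^'k^'v \<Rightarrow> real" where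
  "eff_rank S = (frob_norm S)\<^sup>2 / (spec_norm S)\<^sup>2"

definition top_right_singular_vector :: "real^'k^'v \<Rightarrow> real^'k \<Rightarrow> bool" where
  "top_right_singular_vector S w \<longleftrightarrow>
     norm w = 1 \<and> (transpose S ** S) *v w = (spec_norm S)\<^sup>2 *\<^sub>R w"

definition iso_gaussian :: "real \<Rightarrow> (real^'k) measure" where
  "iso_gaussian \<xi> = density lborel (\<lambda>x. ennreal (\<Prod>i\<in>UNIV. normal_density 0 \<xi> (x $ i)))"

end

theory Submission
  imports Defs
begin

(*
  Write E for the mean of norm (S n) under N(0, xi^2 I) and sigma_1 for the spectral norm of S.
  Since S^T S w1 = sigma_1^2 w1, Cauchy-Schwarz against S w1 gives norm (S x) >= sigma_1 |w1 . x|.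
  As w1 . n ~ N(0, xi^2), this yields E >= sqrt (2/pi) xi sigma_1, and the lower bound follows
  from norm (S q) <= sigma_1 and er(S) >= 1.  For the upper bound, E^2 <= E (norm (S n))^2 =
  xi^2 norm_F(S)^2 and, taking x = q above, norm (S q) >= sigma_1 gamma.  The Gamma ratio mu is
  at least 1 for d >= 2 by log-convexity of Gamma; for d = 1 the matrix has rank one, and then
  E = sqrt (2/pi) xi norm_F(S) = xi norm_F(S) mu exactly.
*)

section \<open>The isotropic Gaussian as a product measure\<close>

lemma measurable_vec_lambda [measurable]:
  "(\<lambda>f. \<chi> i. f i) \<in> PiM UNIV (\<lambda>_::'k. lborel :: real measure) \<rightarrow>\<^sub>M (borel :: (real^'k) measure)"
proof (rule borel_measurable_euclidean_space[THEN iffD2], intro ballI)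
  fix b :: "real^'k" assume "b \<in> Basis"
  then obtain j where "b = axis j 1" by (auto simp: Basis_vec_def)
  then show "(\<lambda>f. (\<chi> i. f i) \<bullet> b) \<in> borel_measurable (PiM UNIV (\<lambda>_. lborel))"
    by (simp add: inner_axis)
qed

lemma lborel_vec_eq_distr_PiM:
  "(lborel :: (real^'k) measure) = distr (PiM UNIV (\<lambda>_::'k. lborel)) borel (\<lambda>f. \<chi> i. f i)"
proof (rule lborel_eqI)
  interpret product_sigma_finite "\<lambda>_::'k. lborel :: real measure" by unfold_locales
  fix l u :: "real^'k"
  assume Basis_le: "\<And>b. b \<in> Basis \<Longrightarrow> l \<bullet> b \<le> u \<bullet> b"
  have le: "l $ i \<le> u $ i" for i
    using Basis_le[of "axis i 1"] by (auto simp: Basis_vec_def inner_axis)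
  have box: "(\<lambda>f. \<chi> i. f i) -` box l u \<inter> space (PiM UNIV (\<lambda>_::'k. lborel :: real measure))
      = PiE UNIV (\<lambda>i. {l$i <..< u$i})"
    by (auto simp: mem_box_cart space_PiM PiE_def Pi_def extensional_def)
  have Basis_vec: "(Basis :: (real^'k) set) = (\<lambda>i. axis i 1) ` UNIV"
    by (auto simp: Basis_vec_def)
  have inj_axis: "inj (\<lambda>i::'k. axis i (1::real))"
    by (auto simp: inj_def axis_eq_axis)
  have "emeasure (distr (PiM UNIV (\<lambda>_::'k. lborel)) borel (\<lambda>f. \<chi> i. f i)) (box l u)
      = emeasure (PiM UNIV (\<lambda>_::'k. lborel :: real measure)) (PiE UNIV (\<lambda>i. {l$i <..< u$i}))"
    by (subst emeasure_distr) (auto simp: box)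
  also have "\<dots> = (\<Prod>i\<in>UNIV. ennreal (u$i - l$i))"
    using le by (subst emeasure_PiM) auto
  also have "\<dots> = ennreal (\<Prod>b\<in>Basis. (u - l) \<bullet> b)"
    using le by (simp add: prod_ennreal Basis_vec prod.reindex[OF inj_axis] inner_axis)
  finally show "emeasure (distr (PiM UNIV (\<lambda>_::'k. lborel)) borel (\<lambda>f. \<chi> i. f i)) (box l u)
      = ennreal (\<Prod>b\<in>Basis. (u - l) \<bullet> b)" .
qed simp

definition normal_measure :: "real \<Rightarrow> real measure" where
  "normal_measure \<xi> = density lborel (\<lambda>x. ennreal (normal_density 0 \<xi> x))"

definition normal_PiM :: "real \<Rightarrow> ('i \<Rightarrow> real) measure" where
  "normal_PiM \<xi> = PiM UNIV (\<lambda>_. normal_measure \<xi>)"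

lemma prob_space_normal_measure: "\<xi> > 0 \<Longrightarrow> prob_space (normal_measure \<xi>)"
  unfolding normal_measure_def by (rule prob_space_normal_density) auto

lemma sets_normal_measure [simp, measurable_cong]: "sets (normal_measure \<xi>) = sets borel"
  by (simp add: normal_measure_def)

lemma sets_normal_PiM: "sets (normal_PiM \<xi>) = sets (PiM UNIV (\<lambda>_. lborel))"
  unfolding normal_PiM_def by (intro sets_PiM_cong) auto

lemma measurable_vec_lambda_normal_PiM [measurable]:
  "(\<lambda>f. \<chi> i. f i) \<in> normal_PiM \<xi> \<rightarrow>\<^sub>M (borel :: (real^'k) measure)"
  using measurable_vec_lambda measurable_cong_sets[OF sets_normal_PiM refl] by blast

lemma prob_space_normal_PiM: "\<xi> > 0 \<Longrightarrow> prob_space (normal_PiM \<xi>)"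
  unfolding normal_PiM_def by (intro prob_space_PiM prob_space_normal_measure)

lemma iso_gaussian_eq_distr_normal_PiM:
  assumes "\<xi> > 0"
  shows "(iso_gaussian \<xi> :: (real^'k) measure) = distr (normal_PiM \<xi>) borel (\<lambda>f. \<chi> i. f i)"
proof -
  let ?P = "PiM UNIV (\<lambda>_::'k. lborel :: real measure)"
  let ?g = "\<lambda>f. ennreal (\<Prod>i\<in>UNIV. normal_density 0 \<xi> (f i))"
  interpret L: product_sigma_finite "\<lambda>_::'k. lborel :: real measure" by unfold_locales
  interpret N: product_prob_space "\<lambda>_::'k. normal_measure \<xi>"
    by (simp add: product_prob_space_def product_prob_space_axioms_def product_sigma_finite_def
        prob_space_normal_measure[OF assms] prob_space_imp_sigma_finite)
  have "density ?P ?g = normal_PiM \<xi>"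
    unfolding normal_PiM_def
  proof (rule N.PiM_eqI)
    fix A :: "'k \<Rightarrow> real set"
    assume A: "\<And>i. i \<in> UNIV \<Longrightarrow> A i \<in> sets (normal_measure \<xi>)"
    have ind: "indicator (PiE UNIV A) f = (\<Prod>i\<in>UNIV. indicator (A i) (f i) :: ennreal)" for f
      by (auto simp: indicator_def PiE_def Pi_def extensional_def)
    have "emeasure (density ?P ?g) (PiE UNIV A)
        = (\<integral>\<^sup>+ f. (\<Prod>i\<in>UNIV. ennreal (normal_density 0 \<xi> (f i)) * indicator (A i) (f i)) \<partial>?P)"
      using A by (subst emeasure_density)
        (auto intro!: sets_PiM_I_finite nn_integral_cong simp: ind prod.distrib prod_ennreal)
    also have "\<dots> = (\<Prod>i\<in>UNIV. \<integral>\<^sup>+ x. ennreal (normal_density 0 \<xi> x) * indicator (A i) x \<partial>lborel)"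
      using A by (intro L.product_nn_integral_prod) auto
    also have "\<dots> = (\<Prod>i\<in>UNIV. emeasure (normal_measure \<xi>) (A i))"
      using A unfolding normal_measure_def by (intro prod.cong refl) (subst emeasure_density, auto)
    finally show "emeasure (density ?P ?g) (PiE UNIV A) = (\<Prod>i\<in>UNIV. emeasure (normal_measure \<xi>) (A i))" .
  qed (auto intro!: sets_PiM_cong)
  moreover have "iso_gaussian \<xi> = density (distr ?P borel (\<lambda>f. \<chi> i. f i)) (\<lambda>x. ennreal (\<Prod>i\<in>UNIV. normal_density 0 \<xi> (x $ i)))"
    unfolding iso_gaussian_def by (subst lborel_vec_eq_distr_PiM) simp
  ultimately show ?thesis
    by (subst (asm) density_distr) auto
qed

lemma indep_vars_PiM_components:
  assumes "I \<noteq> {}" and prob: "\<And>i. i \<in> I \<Longrightarrow> prob_space (M i)"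
  shows "prob_space.indep_vars (PiM I M) M (\<lambda>i f. f i) I"
proof -
  interpret prob_space "PiM I M" by (rule prob_space_PiM[OF prob])
  have "distr (PiM I M) (PiM I M) (\<lambda>f. \<lambda>i\<in>I. f i) = distr (PiM I M) (PiM I M) (\<lambda>f. f)"
    by (rule distr_cong) (auto simp: space_PiM)
  also have "\<dots> = PiM I M" by (rule distr_id)
  also have "\<dots> = PiM I (\<lambda>i. distr (PiM I M) (M i) (\<lambda>f. f i))"
    using prob by (intro PiM_cong) (auto simp: distr_PiM_component)
  finally show ?thesis
    using assms by (subst indep_vars_iff_distr_eq_PiM') auto
qed

lemma normal_PiM_sum_distributed:
  fixes a :: "'i::finite \<Rightarrow> real"
  assumes "\<xi> > 0" and "\<exists>i. a i \<noteq> 0"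
  shows "distributed (normal_PiM \<xi>) lborel (\<lambda>f. \<Sum>i\<in>UNIV. a i * f i)
           (\<lambda>x. ennreal (normal_density 0 (\<xi> * sqrt (\<Sum>i\<in>UNIV. (a i)\<^sup>2)) x))"
proof -
  interpret prob_space "normal_PiM \<xi>" by (rule prob_space_normal_PiM[OF assms(1)])
  define I where "I = {i. a i \<noteq> 0}"
  have I: "finite I" "I \<noteq> {}" using assms(2) by (auto simp: I_def)
  have "indep_vars (\<lambda>_. normal_measure \<xi>) (\<lambda>i f. f i) (UNIV :: 'i set)"
    using indep_vars_PiM_components[of UNIV "\<lambda>_. normal_measure \<xi>"] prob_space_normal_measure[OF assms(1)]
    by (simp add: normal_PiM_def)
  then have "indep_vars (\<lambda>_. borel) (\<lambda>i f. a i * f i) UNIV"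
    by (rule indep_vars_compose2[where Y="\<lambda>i x. a i * x"]) measurable
  then have indep: "indep_vars (\<lambda>_. borel) (\<lambda>i f. a i * f i) I"
    by (rule indep_vars_subset) simp
  have component: "distributed (normal_PiM \<xi>) lborel (\<lambda>f. f i) (\<lambda>x. ennreal (normal_density 0 \<xi> x))" for i
  proof -
    have "distr (normal_PiM \<xi>) lborel (\<lambda>f. f i) = distr (normal_PiM \<xi>) (normal_measure \<xi>) (\<lambda>f. f i)"
      by (rule distr_cong) auto
    also have "\<dots> = normal_measure \<xi>"
      unfolding normal_PiM_def by (rule distr_PiM_component) (auto intro: prob_space_normal_measure assms)
    finally show ?thesis
      by (auto simp: distributed_def normal_measure_def normal_PiM_def)
  qed
  have "distributed (normal_PiM \<xi>) lborel (\<lambda>f. \<Sum>i\<in>I. a i * f i)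
      (normal_density (\<Sum>i\<in>I. 0) (sqrt (\<Sum>i\<in>I. (\<bar>a i\<bar> * \<xi>)\<^sup>2)))"
    using normal_density_affine[OF component assms(1), of "a _" 0] assms(1)
    by (intro sum_indep_normal[OF I indep]) (auto simp: I_def)
  moreover have "(\<lambda>f. \<Sum>i\<in>I. a i * f i) = (\<lambda>f. \<Sum>i\<in>UNIV. a i * f i)"
    by (intro ext sum.mono_neutral_left) (auto simp: I_def)
  moreover have "sqrt (\<Sum>i\<in>I. (\<bar>a i\<bar> * \<xi>)\<^sup>2) = \<xi> * sqrt (\<Sum>i\<in>UNIV. (a i)\<^sup>2)"
    using assms(1) by (simp add: power_mult_distrib sum_distrib_right[symmetric] real_sqrt_mult
        sum.mono_neutral_left I_def)
  ultimately show ?thesis by simp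
qed

lemma sets_iso_gaussian [simp, measurable_cong]: "sets (iso_gaussian \<xi>) = sets borel"
  by (simp add: iso_gaussian_def)

lemma prob_space_iso_gaussian: "\<xi> > 0 \<Longrightarrow> prob_space (iso_gaussian \<xi>)"
  by (simp add: iso_gaussian_eq_distr_normal_PiM prob_space_normal_PiM prob_space.prob_space_distr)

lemma iso_gaussian_inner_distributed:
  fixes a :: "real^'k"
  assumes "\<xi> > 0" and "a \<noteq> 0"
  shows "distributed (iso_gaussian \<xi>) lborel (\<lambda>n. a \<bullet> n) (\<lambda>x. ennreal (normal_density 0 (\<xi> * norm a) x))"
proof -
  have "\<exists>i. a $ i \<noteq> 0" using assms(2) by (metis vec_eq_iff zero_index)
  from normal_PiM_sum_distributed[OF assms(1) this]
  have "distributed (normal_PiM \<xi>) lborel (\<lambda>f. a \<bullet> (\<chi> i. f i))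
          (\<lambda>x. ennreal (normal_density 0 (\<xi> * norm a) x))"
    by (simp add: inner_vec_def norm_vec_def L2_set_def)
  then show ?thesis
    unfolding distributed_def iso_gaussian_eq_distr_normal_PiM[OF assms(1)]
    by (subst distr_distr) (auto simp: comp_def)
qed

lemma iso_gaussian_inner_moments:
  fixes a :: "real^'k"
  assumes "\<xi> > 0"
  shows "integrable (iso_gaussian \<xi>) (\<lambda>n. \<bar>a \<bullet> n\<bar>)"
    and "(\<integral>n. \<bar>a \<bullet> n\<bar> \<partial>iso_gaussian \<xi>) = sqrt (2 / pi) * \<xi> * norm a"
    and "integrable (iso_gaussian \<xi>) (\<lambda>n. (a \<bullet> n)\<^sup>2)"
    and "(\<integral>n. (a \<bullet> n)\<^sup>2 \<partial>iso_gaussian \<xi>) = \<xi>\<^sup>2 * (norm a)\<^sup>2"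
proof -
  have "integrable (iso_gaussian \<xi>) (\<lambda>n. \<bar>a \<bullet> n\<bar>) \<and>
        (\<integral>n. \<bar>a \<bullet> n\<bar> \<partial>iso_gaussian \<xi>) = sqrt (2 / pi) * \<xi> * norm a \<and>
        integrable (iso_gaussian \<xi>) (\<lambda>n. (a \<bullet> n)\<^sup>2) \<and>
        (\<integral>n. (a \<bullet> n)\<^sup>2 \<partial>iso_gaussian \<xi>) = \<xi>\<^sup>2 * (norm a)\<^sup>2"
  proof (cases "a = 0")
    case False
    have \<sigma>: "\<xi> * norm a > 0" using False assms by simp
    note D = iso_gaussian_inner_distributed[OF assms False]
    have "has_bochner_integral lborel (\<lambda>x. normal_density 0 (\<xi> * norm a) x * \<bar>x\<bar>) (sqrt (2 / pi) * \<xi> * norm a)"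
      using normal_moment_abs_odd[OF \<sigma>, of 0 0] by (simp add: mult_ac)
    moreover have "has_bochner_integral lborel (\<lambda>x. normal_density 0 (\<xi> * norm a) x * x\<^sup>2) (\<xi>\<^sup>2 * (norm a)\<^sup>2)"
      using normal_moment_even[OF \<sigma>, of 0 1] by (simp add: power_mult_distrib)
    ultimately show ?thesis
      using distributed_integrable[OF D, of abs] distributed_integral[OF D, of abs]
        distributed_integrable[OF D, of "\<lambda>x. x\<^sup>2"] distributed_integral[OF D, of "\<lambda>x. x\<^sup>2"]
      by (auto simp: has_bochner_integral_iff)
  qed simp
  then show "integrable (iso_gaussian \<xi>) (\<lambda>n. \<bar>a \<bullet> n\<bar>)"
    and "(\<integral>n. \<bar>a \<bullet> n\<bar> \<partial>iso_gaussian \<xi>) = sqrt (2 / pi) * \<xi> * norm a"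
    and "integrable (iso_gaussian \<xi>) (\<lambda>n. (a \<bullet> n)\<^sup>2)"
    and "(\<integral>n. (a \<bullet> n)\<^sup>2 \<partial>iso_gaussian \<xi>) = \<xi>\<^sup>2 * (norm a)\<^sup>2" by blast+
qed

section \<open>Norms of a matrix\<close>

lemma power2_norm_vec: "(norm (x :: real^'n))\<^sup>2 = (\<Sum>i\<in>UNIV. (x $ i)\<^sup>2)"
  unfolding norm_vec_def L2_set_def by (simp add: sum_nonneg)

lemma norm_matrix_vector_mult_sq:
  fixes S :: "real^'k^'v"
  shows "(norm (S *v x))\<^sup>2 = (\<Sum>r\<in>UNIV. (S $ r \<bullet> x)\<^sup>2)"
  by (simp add: power2_norm_vec matrix_vector_mul_component)

lemma frob_norm_sq: "(frob_norm S)\<^sup>2 = (\<Sum>r\<in>UNIV. (norm (S $ r))\<^sup>2)"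
  unfolding frob_norm_def by (simp add: sum_nonneg power2_norm_vec)

lemma norm_matrix_vector_mult_le_frob_norm:
  fixes S :: "real^'k^'v"
  shows "norm (S *v x) \<le> frob_norm S * norm x"
proof (rule power2_le_imp_le)
  have "(S $ r \<bullet> x)\<^sup>2 \<le> (norm (S $ r))\<^sup>2 * (norm x)\<^sup>2" for r
    using Cauchy_Schwarz_ineq2[of "S $ r" x]
    by (metis abs_ge_zero power2_abs power_mono power_mult_distrib)
  then show "(norm (S *v x))\<^sup>2 \<le> (frob_norm S * norm x)\<^sup>2"
    unfolding norm_matrix_vector_mult_sq power_mult_distrib frob_norm_sq sum_distrib_right
    by (rule sum_mono)
qed (simp add: frob_norm_def sum_nonneg)

lemma norm_matrix_vector_mult_le_spec_norm:
  fixes S :: "real^'k^'v"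
  shows "norm (S *v x) \<le> spec_norm S * norm x"
  unfolding spec_norm_def by (rule onorm) (rule matrix_vector_mul_bounded_linear)

lemma spec_norm_le_frob_norm: "spec_norm S \<le> frob_norm S"
  unfolding spec_norm_def by (rule onorm_le) (rule norm_matrix_vector_mult_le_frob_norm)

lemma spec_norm_pos: "S \<noteq> 0 \<Longrightarrow> spec_norm S > 0"
  unfolding spec_norm_def
  by (subst onorm_pos_lt) (auto intro: matrix_vector_mul_bounded_linear simp: matrix_eq)

lemma eff_rank_ge_1: "S \<noteq> 0 \<Longrightarrow> eff_rank S \<ge> 1"
  using spec_norm_pos[of S] spec_norm_le_frob_norm[of S]
  by (simp add: eff_rank_def power_mono)

lemma sqrt_eff_rank: "S \<noteq> 0 \<Longrightarrow> sqrt (eff_rank S) = frob_norm S / spec_norm S"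
  using spec_norm_pos[of S] by (simp add: eff_rank_def real_sqrt_divide frob_norm_def sum_nonneg)

lemma inner_matrix_vector_mult:
  fixes S :: "real^'k^'v"
  shows "(S *v x) \<bullet> (S *v y) = x \<bullet> ((transpose S ** S) *v y)"
  by (metis dot_lmul_matrix matrix_vector_mul_assoc transpose_transpose vector_transpose_matrix)

lemma top_right_singular_vector_bound:
  fixes S :: "real^'k^'v"
  assumes "top_right_singular_vector S w"
  shows "spec_norm S * \<bar>w \<bullet> x\<bar> \<le> norm (S *v x)"
proof -
  let ?\<sigma> = "spec_norm S"
  have w: "norm w = 1" and eigen: "(transpose S ** S) *v w = ?\<sigma>\<^sup>2 *\<^sub>R w"
    using assms by (auto simp: top_right_singular_vector_def)
  have \<sigma>_nonneg: "?\<sigma> \<ge> 0"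
    unfolding spec_norm_def by (rule onorm_pos_le) (rule matrix_vector_mul_bounded_linear)
  have inner_w: "(S *v x) \<bullet> (S *v w) = ?\<sigma>\<^sup>2 * (w \<bullet> x)" for x
    by (simp only: inner_matrix_vector_mult eigen) (simp add: inner_commute)
  have "(norm (S *v w))\<^sup>2 = ?\<sigma>\<^sup>2"
    using inner_w[of w] w by (simp add: power2_norm_eq_inner[symmetric])
  then have norm_w: "norm (S *v w) = ?\<sigma>"
    using \<sigma>_nonneg by simp
  have "?\<sigma> * (?\<sigma> * \<bar>w \<bullet> x\<bar>) = \<bar>(S *v x) \<bullet> (S *v w)\<bar>"
    by (simp add: inner_w abs_mult power2_eq_square)
  also have "\<dots> \<le> ?\<sigma> * norm (S *v x)"
    using Cauchy_Schwarz_ineq2[of "S *v x" "S *v w"] by (simp add: norm_w mult.commute)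
  finally show ?thesis
    using \<sigma>_nonneg by (cases "?\<sigma> = 0") (simp_all add: mult_le_cancel_left)
qed

section \<open>The expected norm of a Gaussian image\<close>

lemma integrable_norm_matrix_vector_mult:
  fixes S :: "real^'k^'v"
  assumes "\<xi> > 0"
  shows "integrable (iso_gaussian \<xi>) (\<lambda>n. norm (S *v n))"
proof (rule Bochner_Integration.integrable_bound)
  show "integrable (iso_gaussian \<xi>) (\<lambda>n. \<Sum>r\<in>UNIV. \<bar>S $ r \<bullet> n\<bar>)"
    by (intro Bochner_Integration.integrable_sum iso_gaussian_inner_moments(1)[OF assms])
  show "AE n in iso_gaussian \<xi>. norm (norm (S *v n)) \<le> norm (\<Sum>r\<in>UNIV. \<bar>S $ r \<bullet> n\<bar>)"
    using norm_le_l1_cart[of "S *v _"] by (simp add: matrix_vector_mul_component)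
  have "continuous_on UNIV (\<lambda>n. norm (S *v n))"
    by (intro continuous_intros linear_continuous_on matrix_vector_mul_bounded_linear)
  then show "(\<lambda>n. norm (S *v n)) \<in> borel_measurable (iso_gaussian \<xi>)"
    using borel_measurable_continuous_onI measurable_cong_sets[OF sets_iso_gaussian refl] by blast
qed

lemma expected_sq_norm_matrix_vector_mult:
  fixes S :: "real^'k^'v"
  assumes "\<xi> > 0"
  shows "integrable (iso_gaussian \<xi>) (\<lambda>n. (norm (S *v n))\<^sup>2)"
    and "(\<integral>n. (norm (S *v n))\<^sup>2 \<partial>iso_gaussian \<xi>) = \<xi>\<^sup>2 * (frob_norm S)\<^sup>2"
  unfolding norm_matrix_vector_mult_sq
  by (auto simp: iso_gaussian_inner_moments[OF assms] frob_norm_sq sum_distrib_left)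

lemma expected_norm_le_frob_norm:
  fixes S :: "real^'k^'v"
  assumes "\<xi> > 0"
  shows "(\<integral>n. norm (S *v n) \<partial>iso_gaussian \<xi>) \<le> \<xi> * frob_norm S"
proof (rule power2_le_imp_le)
  interpret prob_space "iso_gaussian \<xi>" by (rule prob_space_iso_gaussian[OF assms])
  note square = expected_sq_norm_matrix_vector_mult[OF assms, of S]
  have "(\<integral>n. norm (S *v n) \<partial>iso_gaussian \<xi>)\<^sup>2 \<le> (\<integral>n. (norm (S *v n))\<^sup>2 \<partial>iso_gaussian \<xi>)"
    using variance_eq[OF integrable_norm_matrix_vector_mult[OF assms] square(1)]
      variance_positive[of "\<lambda>n. norm (S *v n)"]
    by linarith
  then show "(\<integral>n. norm (S *v n) \<partial>iso_gaussian \<xi>)\<^sup>2 \<le> (\<xi> * frob_norm S)\<^sup>2"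
    by (simp add: square(2) power_mult_distrib)
qed (use assms in \<open>simp add: frob_norm_def sum_nonneg\<close>)

lemma expected_norm_ge_spec_norm:
  fixes S :: "real^'k^'v"
  assumes "top_right_singular_vector S w" and "\<xi> > 0"
  shows "sqrt (2 / pi) * \<xi> * spec_norm S \<le> (\<integral>n. norm (S *v n) \<partial>iso_gaussian \<xi>)"
proof -
  have "(\<integral>n. spec_norm S * \<bar>w \<bullet> n\<bar> \<partial>iso_gaussian \<xi>) \<le> (\<integral>n. norm (S *v n) \<partial>iso_gaussian \<xi>)"
    using top_right_singular_vector_bound[OF assms(1)] iso_gaussian_inner_moments(1)[OF assms(2)]
      integrable_norm_matrix_vector_mult[OF assms(2)]
    by (intro integral_mono) auto
  then show ?thesis
    using assms iso_gaussian_inner_moments(2)[OF assms(2), of w]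
    by (simp add: top_right_singular_vector_def mult_ac)
qed

lemma matrix_vector_mult_outer:
  fixes u :: "real^'v" and a x :: "real^'k"
  shows "(\<chi> i j. u $ i * a $ j) *v x = (a \<bullet> x) *\<^sub>R u"
  by (simp add: vec_eq_iff matrix_vector_mult_def inner_vec_def sum_distrib_left mult_ac)

lemma frob_norm_outer:
  fixes u :: "real^'v" and a :: "real^'k"
  shows "frob_norm (\<chi> i j. u $ i * a $ j) = norm u * norm a"
  by (simp add: frob_norm_def norm_vec_def L2_set_def power_mult_distrib
      sum_product[symmetric] real_sqrt_mult)

lemma outer_if_min_card_eq_1:
  fixes S :: "real^'k^'v"
  assumes "min CARD('k) CARD('v) = 1"
  obtains u a where "S = (\<chi> i j. u $ i * a $ j)"
proof (cases "CARD('v) = 1")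
  case True
  then obtain r :: 'v where "UNIV = {r}" by (metis card_1_singletonE)
  then have "S = (\<chi> i j. (\<chi> _. 1) $ i * S $ r $ j)" by (auto simp: vec_eq_iff)
  then show ?thesis by (rule that)
next
  case False
  then have "CARD('k) = 1" using assms by linarith
  then obtain c :: 'k where "UNIV = {c}" by (metis card_1_singletonE)
  then have "S = (\<chi> i j. (\<chi> i. S $ i $ c) $ i * (\<chi> _. 1) $ j)" by (auto simp: vec_eq_iff)
  then show ?thesis by (rule that)
qed

lemma expected_norm_rank_one:
  fixes S :: "real^'k^'v"
  assumes "min CARD('k) CARD('v) = 1" and "\<xi> > 0"
  shows "(\<integral>n. norm (S *v n) \<partial>iso_gaussian \<xi>) = sqrt (2 / pi) * \<xi> * frob_norm S"
proof -
  obtain u a where "S = (\<chi> i j. u $ i * a $ j)" using outer_if_min_card_eq_1[OF assms(1)] .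
  then show ?thesis
    by (simp add: matrix_vector_mult_outer frob_norm_outer iso_gaussian_inner_moments[OF assms(2)])
qed

section \<open>The mean of the chi distribution\<close>

definition chi_mean :: "nat \<Rightarrow> real" where
  "chi_mean d = sqrt 2 * Gamma ((real d + 1) / 2) / Gamma (real d / 2)"

lemma chi_mean_1: "chi_mean 1 = sqrt (2 / pi)"
  by (simp add: chi_mean_def Gamma_one_half_real real_sqrt_divide)

lemma Gamma_sq_le_Gamma_plus_half:
  fixes x :: real
  assumes "x > 0"
  shows "(x * Gamma x)\<^sup>2 \<le> (x + 1/2) * (Gamma (x + 1/2))\<^sup>2"
proof -
  have "(ln \<circ> Gamma) ((1 - 1/2) *\<^sub>R (x + 1/2) + (1/2) *\<^sub>R (x + 3/2))
        \<le> (1 - 1/2) * (ln \<circ> Gamma) (x + 1/2) + (1/2) * (ln \<circ> Gamma) (x + 3/2)"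
    by (rule convex_onD[OF log_convex_Gamma_real]) (use assms in auto)
  moreover have "(1 - 1/2) *\<^sub>R (x + 1/2) + (1/2) *\<^sub>R (x + 3/2) = x + 1"
    by (simp add: field_simps)
  ultimately have "2 * ln (Gamma (x + 1)) \<le> ln (Gamma (x + 1/2)) + ln (Gamma (x + 3/2))"
    by simp
  moreover have pos: "Gamma (x + 1/2) > 0" "Gamma (x + 3/2) > 0" "Gamma (x + 1) > 0"
    using assms by auto
  ultimately have "ln ((Gamma (x + 1))\<^sup>2) \<le> ln (Gamma (x + 1/2) * Gamma (x + 3/2))"
    by (simp add: ln_mult power2_eq_square)
  then have "(Gamma (x + 1))\<^sup>2 \<le> Gamma (x + 1/2) * Gamma (x + 3/2)"
    using pos by simp
  moreover have "x \<notin> \<int>\<^sub>\<le>\<^sub>0" "x + 1/2 \<notin> \<int>\<^sub>\<le>\<^sub>0"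
    using assms nonpos_Ints_nonpos by force+
  ultimately show ?thesis
    using Gamma_plus1[of x] Gamma_plus1[of "x + 1/2"]
    by (simp add: add.assoc power_mult_distrib) (simp add: power2_eq_square mult.left_commute)
qed

lemma one_le_chi_mean:
  assumes "d \<ge> 2"
  shows "1 \<le> chi_mean d"
proof -
  define x where "x = real d / 2"
  have x: "x \<ge> 1" using assms by (simp add: x_def)
  have "x * 1 \<le> x * x" using x by (intro mult_left_mono) auto
  then have "x + 1/2 \<le> 2 * x\<^sup>2" using x unfolding power2_eq_square by linarith
  have "(x * Gamma x)\<^sup>2 \<le> (x + 1/2) * (Gamma (x + 1/2))\<^sup>2"
    using x by (intro Gamma_sq_le_Gamma_plus_half) simp
  also have "\<dots> \<le> 2 * x\<^sup>2 * (Gamma (x + 1/2))\<^sup>2"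
    using \<open>x + 1/2 \<le> 2 * x\<^sup>2\<close> by (rule mult_right_mono) simp
  also have "\<dots> = (x * (sqrt 2 * Gamma (x + 1/2)))\<^sup>2"
    by (simp add: power_mult_distrib)
  finally have "x * Gamma x \<le> x * (sqrt 2 * Gamma (x + 1/2))"
    by (rule power2_le_imp_le) (use x in simp)
  then have "Gamma x \<le> sqrt 2 * Gamma (x + 1/2)"
    using x by simp
  moreover have d_half: "real d / 2 = x" "(real d + 1) / 2 = x + 1/2"
    by (simp_all add: x_def add_divide_distrib)
  ultimately show ?thesis
    using x unfolding chi_mean_def d_half by (simp add: le_divide_eq)
qed

lemma expected_norm_le_chi_mean:
  fixes S :: "real^'k^'v"
  assumes "\<xi> > 0"
  shows "(\<integral>n. norm (S *v n) \<partial>iso_gaussian \<xi>) \<le> \<xi> * frob_norm S * chi_mean (min CARD('k) CARD('v))"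
proof (cases "min CARD('k) CARD('v) = 1")
  case True
  then have "chi_mean (min CARD('k) CARD('v)) = sqrt (2 / pi)"
    using chi_mean_1 by simp
  with expected_norm_rank_one[OF True assms] show ?thesis
    by (simp add: mult_ac)
next
  case False
  moreover have "0 < min CARD('k) CARD('v)" by simp
  ultimately have "2 \<le> min CARD('k) CARD('v)" by linarith
  then have "1 \<le> chi_mean (min CARD('k) CARD('v))" by (rule one_le_chi_mean)
  moreover have "0 \<le> \<xi> * frob_norm S"
    using assms by (simp add: frob_norm_def sum_nonneg)
  ultimately have "\<xi> * frob_norm S \<le> \<xi> * frob_norm S * chi_mean (min CARD('k) CARD('v))"
    using mult_left_mono by fastforce
  then show ?thesis
    using expected_norm_le_frob_norm[OF assms, of S] by linarith
qed

theorem corollary2p5: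
  fixes S :: "real^'k^'v" and w1 q :: "real^'k" and \<xi> \<gamma> :: real and d :: nat
  assumes "S \<noteq> 0"
    and "top_right_singular_vector S w1"
    and "d = min CARD('k) CARD('v)"
    and "norm q = 1"
    and "S *v q \<noteq> 0"
    and "\<gamma> = \<bar>q \<bullet> w1\<bar>"
    and "\<gamma> > 0"
    and "\<xi> > 0"
  shows "sqrt (2 / (pi * eff_rank S)) * \<xi>
           \<le> (\<integral>n. norm (S *v (q + n) - S *v q) / norm (S *v q) \<partial>iso_gaussian \<xi>)
       \<and> (\<integral>n. norm (S *v (q + n) - S *v q) / norm (S *v q) \<partial>iso_gaussian \<xi>)
           \<le> sqrt (eff_rank S) / \<gamma> * \<xi> *
              (sqrt 2 * Gamma ((real d + 1) / 2) / Gamma (real d / 2))"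
proof -
  define E where "E = (\<integral>n. norm (S *v n) \<partial>iso_gaussian \<xi>)"
  define \<sigma> where "\<sigma> = spec_norm S"
  define c where "c = norm (S *v q)"
  have "\<sigma> > 0" "c > 0" "E \<ge> 0"
    using spec_norm_pos[OF assms(1)] assms(5) by (simp_all add: \<sigma>_def c_def E_def)
  have "c \<le> \<sigma>"
    using norm_matrix_vector_mult_le_spec_norm[of S q] assms(4) by (simp add: c_def \<sigma>_def)
  have "\<sigma> * \<gamma> \<le> c"
    using top_right_singular_vector_bound[OF assms(2), of q] assms(6)
    by (simp add: c_def \<sigma>_def inner_commute)
  have "sqrt (2 / (pi * eff_rank S)) * \<xi> \<le> sqrt (2 / pi) * \<xi>"
    using eff_rank_ge_1[OF assms(1)] assms(8) by (simp add: divide_simps)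
  also have "\<dots> \<le> E / \<sigma>"
    using expected_norm_ge_spec_norm[OF assms(2,8)] \<open>\<sigma> > 0\<close> by (simp add: E_def \<sigma>_def field_simps)
  also have "\<dots> \<le> E / c"
    using \<open>c \<le> \<sigma>\<close> \<open>c > 0\<close> \<open>E \<ge> 0\<close> by (intro divide_left_mono) auto
  finally have lower: "sqrt (2 / (pi * eff_rank S)) * \<xi> \<le> E / c" .
  have "E / c \<le> E / (\<sigma> * \<gamma>)"
    using \<open>\<sigma> * \<gamma> \<le> c\<close> \<open>c > 0\<close> \<open>E \<ge> 0\<close> \<open>\<sigma> > 0\<close> assms(7) by (intro divide_left_mono) auto
  also have "\<dots> \<le> \<xi> * frob_norm S * chi_mean d / (\<sigma> * \<gamma>)"
    using expected_norm_le_chi_mean[OF assms(8), of S] \<open>\<sigma> > 0\<close> assms(3,7)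
    by (intro divide_right_mono) (simp_all add: E_def)
  also have "\<dots> = sqrt (eff_rank S) / \<gamma> * \<xi> * chi_mean d"
    by (simp add: sqrt_eff_rank[OF assms(1)] \<sigma>_def)
  finally have upper: "E / c \<le> sqrt (eff_rank S) / \<gamma> * \<xi> * chi_mean d" .
  have "(\<integral>n. norm (S *v (q + n) - S *v q) / norm (S *v q) \<partial>iso_gaussian \<xi>) = E / c"
    by (simp add: E_def c_def matrix_vector_right_distrib)
  then show ?thesis
    using lower upper by (simp add: chi_mean_def)
qed

end
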